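(* Let $X,Y$ be random variables with $P(X=k)=p_k\ge0$ and $P(Y=k)=q_k\ge0$ for $k=0,1,2,\dots$, with $q_k>0$ so that the ratios $p_k/q_k$ are defined. Let $L_X(x)=\sum_{k=0}^\infty p_ke^{-kx}$ and $L_Y(x)=\sum_{k=0}^\infty q_ke^{-kx}$ $(x>0)$. If one of the conditions (i) the sequence $\{p_k/q_k\}$ is increasing (resp. decreasing) for all $k\ge0$; (ii) there exists an integer $m\ge1$ such that $\{p_k/q_k\}$ is increasing (resp. decreasing) for $0\le k\le m$ and decreasing (resp. increasing) for $k\ge m$, and $H_{L_X,L_Y}(0^+)\ge0$ (resp. $\le0$); holds, then $Y\le_{Lt-r}X$ (resp. $X\le_{Lt-r}Y$).
   Context: For a random variable $Z\ge0$ with distribution function $F_Z$, its Laplace–Stieltjes transform is $L_Z(x)=\int_0^\infty e^{-tx}\,dF_Z(t)$, $x>0$. For random variables $X,Y\ge0$, $X\le_{Lt-r}Y$ (Laplace transform ratio order) means that $x\mapsto L_Y(x)/L_X(x)$ is decreasing on $(0,\infty)$. $H_{F,G}=\frac{F'}{G'}G-F$ and $H_{F,G}(0^+)=\lim_{x\to0^+}H_{F,G}(x)$. *)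

theory Defs
  imports "HOL-Analysis.Analysis"
begin

definition LST :: "(nat \<Rightarrow> real) \<Rightarrow> real \<Rightarrow> real" where
  "LST p x = (\<Sum>k. p k * exp (- real k * x))"

definition H_fun :: "(real \<Rightarrow> real) \<Rightarrow> (real \<Rightarrow> real) \<Rightarrow> real \<Rightarrow> real" where
  "H_fun F G x = deriv F x / deriv G x * G x - F x"

text \<open>Laplace transform ratio order: X <=_{Lt-r} Y iff L_Y/L_X is decreasing on (0,oo).
  Here X has pmf p and Y has pmf q.\<close>
definition lt_r_le :: "(nat \<Rightarrow> real) \<Rightarrow> (nat \<Rightarrow> real) \<Rightarrow> bool" where
  "lt_r_le p q \<longleftrightarrow> (\<forall>x y. 0 < x \<longrightarrow> x \<le> y \<longrightarrow> LST q y / LST p y \<le> LST q x / LST p x)"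

end

theory Submission
  imports Defs
begin

(* Substituting s = exp (-x) turns L_X and L_Y into the power series A(s) = sum p_k s^k and
   B(s) = sum q_k s^k on [0,1), and H_{L_X,L_Y}(x) into H_{A,B}(s), the chain-rule factors
   cancelling. Since (A/B)' = B' H_{A,B} / B^2, the ratio A/B increases exactly where
   H_{A,B} >= 0, and H_{A,B} is monotone wherever A'/B' is.
   (i) If p_k/q_k increases, the coefficients of A - c B with c = (A/B)(x) change sign once,
   from negative to nonnegative, which forces (A/B)(y) >= c for y >= x.
   (ii) Differentiating shifts the coefficient ratio by one index, so by induction on the peak
   m the ratio A'/B' is unimodal. Hence H_{A,B} first increases from
   H_{A,B}(0) = p_1 q_0 / q_1 - p_0 >= 0 and then decreases towards its limit at s = 1, which
   is H_{L_X,L_Y}(0+) >= 0; so H_{A,B} >= 0 throughout.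
   The decreasing cases follow by replacing p with -p. *)

section \<open>Unimodal functions\<close>

definition unimodal_on :: "real set \<Rightarrow> (real \<Rightarrow> real) \<Rightarrow> bool" where
  "unimodal_on I f \<longleftrightarrow> (\<exists>t. mono_on (I \<inter> {..t}) f \<and> antimono_on (I \<inter> {t..}) f)"

lemma unimodal_on_cong:
  "(\<And>s. s \<in> I \<Longrightarrow> f s = g s) \<Longrightarrow> unimodal_on I f \<longleftrightarrow> unimodal_on I g"
  unfolding unimodal_on_def monotone_on_def by auto

lemma unimodal_on_sign_change:
  fixes h :: "real \<Rightarrow> real"
  assumes "unimodal_on {a..<b} h" "0 \<le> h a"
  shows "\<exists>T. (\<forall>s\<in>{a..<b}. s < T \<longrightarrow> 0 \<le> h s) \<and> (\<forall>s\<in>{a..<b}. T < s \<longrightarrow> h s \<le> 0)"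
proof -
  obtain t where mono: "mono_on ({a..<b} \<inter> {..t}) h" and anti: "antimono_on ({a..<b} \<inter> {t..}) h"
    using assms(1) unfolding unimodal_on_def by blast
  have before_peak: "0 \<le> h s" if "s \<in> {a..<b}" "s \<le> t" for s
    using assms(2) mono_onD[OF mono, of a s] that by simp
  define S where "S = insert t {s \<in> {a..<b}. t \<le> s \<and> 0 \<le> h s}"
  have bdd: "bdd_above S"
    unfolding S_def bdd_above_def by (intro exI[of _ "max t b"]) auto
  have "t \<le> Sup S"
    using bdd by (intro cSup_upper) (simp_all add: S_def)
  have "0 \<le> h s" if s: "s \<in> {a..<b}" "s < Sup S" for s
  proof (cases "s \<le> t")
    case True
    then show ?thesis
      using before_peak s(1) by blast
  next
    case False
    obtain s' where "s' \<in> S" "s < s'"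
      using s(2) less_cSup_iff[OF _ bdd] by (auto simp: S_def)
    then have "s' \<in> {a..<b}" "t \<le> s'" "0 \<le> h s'"
      using False by (auto simp: S_def)
    moreover have "h s' \<le> h s"
      using monotone_onD[OF anti, of s s'] s(1) False \<open>s < s'\<close> calculation by simp
    ultimately show ?thesis
      by linarith
  qed
  moreover have "h s \<le> 0" if "s \<in> {a..<b}" "Sup S < s" for s
  proof (rule ccontr)
    assume "\<not> h s \<le> 0"
    then have "s \<in> S"
      using that \<open>t \<le> Sup S\<close> by (simp add: S_def)
    then show False
      using cSup_upper[OF _ bdd] that(2) by fastforce
  qed
  ultimately show ?thesis
    by blast
qed

lemma unimodal_on_nonneg_if_tendsto:
  fixes h :: "real \<Rightarrow> real"
  assumes "unimodal_on {a..<b} h" "0 \<le> h a"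
    and "((\<lambda>s. ereal (h s)) \<longlongrightarrow> c) (at_left b)" "0 \<le> c"
    and s: "s \<in> {a..<b}"
  shows "0 \<le> h s"
proof -
  obtain t where mono: "mono_on ({a..<b} \<inter> {..t}) h" and anti: "antimono_on ({a..<b} \<inter> {t..}) h"
    using assms(1) unfolding unimodal_on_def by blast
  show ?thesis
  proof (cases "s \<le> t")
    case True
    then show ?thesis
      using assms(2) mono_onD[OF mono, of a s] s by simp
  next
    case False
    have "\<forall>\<^sub>F z in at_left b. ereal (h z) \<le> ereal (h s)"
      unfolding eventually_at_left_field
    proof (intro exI[of _ s] conjI allI impI)
      fix z assume "s < z" "z < b"
      then show "ereal (h z) \<le> ereal (h s)"
        using monotone_onD[OF anti, of s z] s False by simp
    qed (use s in simp)
    then have "c \<le> ereal (h s)"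
      using tendsto_le[OF trivial_limit_at_left_real tendsto_const assms(3)] by blast
    then show ?thesis
      using \<open>0 \<le> c\<close> by (metis ereal_less_eq(3) order_trans zero_ereal_def)
  qed
qed

section \<open>Ratios of differentiable functions\<close>

locale differentiable_ratio =
  fixes F G :: "real \<Rightarrow> real" and a b :: real
  assumes differentiable_F: "\<And>s. s \<in> {a..<b} \<Longrightarrow> F differentiable (at s)"
    and differentiable_G: "\<And>s. s \<in> {a..<b} \<Longrightarrow> G differentiable (at s)"
    and G_pos: "\<And>s. s \<in> {a..<b} \<Longrightarrow> 0 < G s"
    and deriv_G_pos: "\<And>s. s \<in> {a..<b} \<Longrightarrow> 0 < deriv G s"
begin

lemma has_real_derivative_F: "s \<in> {a..<b} \<Longrightarrow> (F has_real_derivative deriv F s) (at s)"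
  using differentiable_F DERIV_deriv_iff_real_differentiable by blast

lemma has_real_derivative_G: "s \<in> {a..<b} \<Longrightarrow> (G has_real_derivative deriv G s) (at s)"
  using differentiable_G DERIV_deriv_iff_real_differentiable by blast

lemma ratio_has_real_derivative:
  assumes "s \<in> {a..<b}"
  shows "((\<lambda>s. F s / G s) has_real_derivative deriv G s * H_fun F G s / (G s)\<^sup>2) (at s)"
proof -
  have "deriv G s * H_fun F G s = deriv F s * G s - F s * deriv G s"
    using deriv_G_pos[OF assms] by (simp add: H_fun_def field_simps)
  moreover have "G s \<noteq> 0"
    using G_pos[OF assms] by simp
  ultimately show ?thesis
    using DERIV_divide[OF has_real_derivative_F[OF assms] has_real_derivative_G[OF assms]]
    by (simp add: power2_eq_square)
qed

lemma ratio_continuous_on: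
  assumes "a \<le> x" "y < b"
  shows "continuous_on {x..y} (\<lambda>s. F s / G s)"
proof (intro DERIV_atLeastAtMost_imp_continuous_on)
  fix s assume "x \<le> s" "s \<le> y"
  then have "s \<in> {a..<b}"
    using assms by simp
  then show "\<exists>d. ((\<lambda>s. F s / G s) has_real_derivative d) (at s)"
    using ratio_has_real_derivative by blast
qed

lemma ratio_le_if_H_fun_nonneg:
  assumes "a \<le> x" "x \<le> y" "y < b" and H_nonneg: "\<And>s. x < s \<Longrightarrow> s < y \<Longrightarrow> 0 \<le> H_fun F G s"
  shows "F x / G x \<le> F y / G y"
proof (rule DERIV_nonneg_imp_increasing_open[OF \<open>x \<le> y\<close>])
  fix s assume "x < s" "s < y"
  then have "s \<in> {a..<b}"
    using assms by simp
  moreover have "0 \<le> deriv G s * H_fun F G s / (G s)\<^sup>2"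
    using deriv_G_pos[OF \<open>s \<in> {a..<b}\<close>] H_nonneg[OF \<open>x < s\<close> \<open>s < y\<close>] by simp
  ultimately show "\<exists>d. ((\<lambda>s. F s / G s) has_real_derivative d) (at s) \<and> 0 \<le> d"
    using ratio_has_real_derivative by blast
qed (use assms ratio_continuous_on in simp)

lemma ratio_ge_if_H_fun_nonpos:
  assumes "a \<le> x" "x \<le> y" "y < b" and H_nonpos: "\<And>s. x < s \<Longrightarrow> s < y \<Longrightarrow> H_fun F G s \<le> 0"
  shows "F y / G y \<le> F x / G x"
proof (rule DERIV_nonpos_imp_decreasing_open[OF \<open>x \<le> y\<close>])
  fix s assume "x < s" "s < y"
  then have "s \<in> {a..<b}"
    using assms by simp
  moreover have "deriv G s * H_fun F G s / (G s)\<^sup>2 \<le> 0"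
    using deriv_G_pos[OF \<open>s \<in> {a..<b}\<close>] H_nonpos[OF \<open>x < s\<close> \<open>s < y\<close>]
    by (intro divide_nonpos_nonneg mult_nonneg_nonpos) auto
  ultimately show "\<exists>d. ((\<lambda>s. F s / G s) has_real_derivative d) (at s) \<and> d \<le> 0"
    using ratio_has_real_derivative by blast
qed (use assms ratio_continuous_on in simp)

lemma scaled_difference_has_real_derivative:
  assumes "s \<in> {a..<b}"
  shows "((\<lambda>s. c * G s - F s) has_real_derivative deriv G s * (c - deriv F s / deriv G s)) (at s)"
proof -
  have "c * deriv G s - deriv F s = deriv G s * (c - deriv F s / deriv G s)"
    using deriv_G_pos[OF assms] by (simp add: field_simps)
  then show ?thesis
    using DERIV_diff[OF DERIV_cmult[OF has_real_derivative_G[OF assms], of c] has_real_derivative_F[OF assms]]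
    by simp
qed

lemma H_fun_mono_on:
  assumes J: "is_interval J" "J \<subseteq> {a..<b}" and mono: "mono_on J (\<lambda>s. deriv F s / deriv G s)"
  shows "mono_on J (H_fun F G)"
proof (rule mono_onI)
  fix x y assume "x \<in> J" "y \<in> J" "x \<le> y"
  define D where "D s = deriv F s / deriv G s" for s
  have "D y * G x - F x \<le> D y * G y - F y"
  proof (rule DERIV_nonneg_imp_nondecreasing[OF \<open>x \<le> y\<close>])
    fix z assume "x \<le> z" "z \<le> y"
    then have "z \<in> J"
      using J(1) \<open>x \<in> J\<close> \<open>y \<in> J\<close> unfolding is_interval_1 by blast
    then have "D z \<le> D y" "0 < deriv G z"
      using J(2) deriv_G_pos mono_onD[OF mono _ \<open>y \<in> J\<close> \<open>z \<le> y\<close>] unfolding D_def by auto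
    then have "0 \<le> deriv G z * (D y - D z)"
      by simp
    then show "\<exists>d. ((\<lambda>s. D y * G s - F s) has_real_derivative d) (at z) \<and> 0 \<le> d"
      using scaled_difference_has_real_derivative \<open>z \<in> J\<close> J(2) unfolding D_def by blast
  qed
  moreover have "D x * G x \<le> D y * G x"
    using mono_onD[OF mono \<open>x \<in> J\<close> \<open>y \<in> J\<close> \<open>x \<le> y\<close>] G_pos[of x] \<open>x \<in> J\<close> J(2)
    unfolding D_def by (intro mult_right_mono) auto
  ultimately show "H_fun F G x \<le> H_fun F G y"
    by (simp add: H_fun_def D_def)
qed

lemma H_fun_antimono_on:
  assumes J: "is_interval J" "J \<subseteq> {a..<b}" and antimono: "antimono_on J (\<lambda>s. deriv F s / deriv G s)"
  shows "antimono_on J (H_fun F G)"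
proof (rule monotone_onI)
  fix x y assume "x \<in> J" "y \<in> J" "x \<le> y"
  define D where "D s = deriv F s / deriv G s" for s
  have "D y * G y - F y \<le> D y * G x - F x"
  proof (rule DERIV_nonpos_imp_nonincreasing[OF \<open>x \<le> y\<close>])
    fix z assume "x \<le> z" "z \<le> y"
    then have "z \<in> J"
      using J(1) \<open>x \<in> J\<close> \<open>y \<in> J\<close> unfolding is_interval_1 by blast
    then have "D y \<le> D z" "0 < deriv G z"
      using J(2) deriv_G_pos monotone_onD[OF antimono _ \<open>y \<in> J\<close> \<open>z \<le> y\<close>] unfolding D_def by auto
    then have "deriv G z * (D y - D z) \<le> 0"
      by (simp add: mult_nonneg_nonpos)
    then show "\<exists>d. ((\<lambda>s. D y * G s - F s) has_real_derivative d) (at z) \<and> d \<le> 0"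
      using scaled_difference_has_real_derivative \<open>z \<in> J\<close> J(2) unfolding D_def by blast
  qed
  moreover have "D y * G x \<le> D x * G x"
    using monotone_onD[OF antimono \<open>x \<in> J\<close> \<open>y \<in> J\<close> \<open>x \<le> y\<close>] G_pos[of x] \<open>x \<in> J\<close> J(2)
    unfolding D_def by (intro mult_right_mono) auto
  ultimately show "H_fun F G y \<le> H_fun F G x"
    by (simp add: H_fun_def D_def)
qed

lemma H_fun_unimodal_on:
  assumes "unimodal_on {a..<b} (\<lambda>s. deriv F s / deriv G s)"
  shows "unimodal_on {a..<b} (H_fun F G)"
proof -
  obtain t where "mono_on ({a..<b} \<inter> {..t}) (\<lambda>s. deriv F s / deriv G s)"
    and "antimono_on ({a..<b} \<inter> {t..}) (\<lambda>s. deriv F s / deriv G s)"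
    using assms unfolding unimodal_on_def by blast
  moreover have "is_interval ({a..<b} \<inter> {..t})" "is_interval ({a..<b} \<inter> {t..})"
    by (auto simp: is_interval_1)
  ultimately have "mono_on ({a..<b} \<inter> {..t}) (H_fun F G)" "antimono_on ({a..<b} \<inter> {t..}) (H_fun F G)"
    using H_fun_mono_on H_fun_antimono_on by blast+
  then show ?thesis
    unfolding unimodal_on_def by blast
qed

lemma ratio_unimodal_on:
  assumes "unimodal_on {a..<b} (\<lambda>s. deriv F s / deriv G s)" "0 \<le> H_fun F G a"
  shows "unimodal_on {a..<b} (\<lambda>s. F s / G s)"
proof -
  obtain T where pos: "\<And>s. s \<in> {a..<b} \<Longrightarrow> s < T \<Longrightarrow> 0 \<le> H_fun F G s"
    and neg: "\<And>s. s \<in> {a..<b} \<Longrightarrow> T < s \<Longrightarrow> H_fun F G s \<le> 0"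
    using unimodal_on_sign_change[OF H_fun_unimodal_on[OF assms(1)] assms(2)] by blast
  have "mono_on ({a..<b} \<inter> {..T}) (\<lambda>s. F s / G s)"
  proof (rule mono_onI)
    fix x y assume "x \<in> {a..<b} \<inter> {..T}" "y \<in> {a..<b} \<inter> {..T}" "x \<le> y"
    then show "F x / G x \<le> F y / G y"
      by (intro ratio_le_if_H_fun_nonneg pos) auto
  qed
  moreover have "antimono_on ({a..<b} \<inter> {T..}) (\<lambda>s. F s / G s)"
  proof (rule monotone_onI)
    fix x y assume "x \<in> {a..<b} \<inter> {T..}" "y \<in> {a..<b} \<inter> {T..}" "x \<le> y"
    then show "F y / G y \<le> F x / G x"
      by (intro ratio_ge_if_H_fun_nonpos neg) auto
  qed
  ultimately show ?thesis
    unfolding unimodal_on_def by blast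
qed

lemma ratio_mono_on:
  assumes "unimodal_on {a..<b} (\<lambda>s. deriv F s / deriv G s)" "0 \<le> H_fun F G a"
    and "((\<lambda>s. ereal (H_fun F G s)) \<longlongrightarrow> c) (at_left b)" "0 \<le> c"
  shows "mono_on {a..<b} (\<lambda>s. F s / G s)"
proof (rule mono_onI)
  fix x y assume "x \<in> {a..<b}" "y \<in> {a..<b}" "x \<le> y"
  then show "F x / G x \<le> F y / G y"
    using unimodal_on_nonneg_if_tendsto[OF H_fun_unimodal_on[OF assms(1)] assms(2-4)]
    by (intro ratio_le_if_H_fun_nonneg) auto
qed

end

section \<open>Power series on the unit interval\<close>

definition powser :: "(nat \<Rightarrow> real) \<Rightarrow> real \<Rightarrow> real" where
  "powser a s = (\<Sum>n. a n * s ^ n)"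

lemma summable_powser:
  fixes a :: "nat \<Rightarrow> real"
  assumes "1 \<le> conv_radius a" "\<bar>s\<bar> < 1"
  shows "summable (\<lambda>n. a n * s ^ n)"
proof (rule summable_in_conv_radius)
  have "ereal (norm s) < 1"
    using assms(2) by simp
  then show "ereal (norm s) < conv_radius a"
    using assms(1) by (rule less_le_trans)
qed

lemma conv_radius_diffs: "conv_radius a \<le> conv_radius (diffs a)"
  for a :: "nat \<Rightarrow> real"
  using fps_conv_radius_deriv[of "Abs_fps a"] by (simp add: fps_conv_radius_def fps_deriv_def diffs_def)

lemma conv_radius_uminus: "conv_radius (\<lambda>n. - a n) = conv_radius a"
  for a :: "nat \<Rightarrow> real"
  using conv_radius_norm[of "\<lambda>n. - a n"] conv_radius_norm[of a] by simp

lemma powser_has_real_derivative: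
  assumes "1 \<le> conv_radius a" "\<bar>s\<bar> < 1"
  shows "(powser a has_real_derivative powser (diffs a) s) (at s)"
  using termdiffs_strong'[of 1 a s] summable_powser[OF assms(1)] assms(2)
  unfolding powser_def[abs_def] by simp

lemma deriv_powser: "1 \<le> conv_radius a \<Longrightarrow> \<bar>s\<bar> < 1 \<Longrightarrow> deriv (powser a) s = powser (diffs a) s"
  by (rule DERIV_imp_deriv) (rule powser_has_real_derivative)

lemma powser_uminus: "1 \<le> conv_radius a \<Longrightarrow> \<bar>s\<bar> < 1 \<Longrightarrow> powser (\<lambda>n. - a n) s = - powser a s"
  unfolding powser_def using suminf_minus[OF summable_powser] by simp

lemma powser_pos:
  assumes "\<And>n. 0 \<le> a n" "0 < a k" "1 \<le> conv_radius a" "0 < s" "s < 1"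
  shows "0 < powser a s"
  unfolding powser_def using assms summable_powser[OF assms(3), of s] by (intro suminf_pos2[of _ k]) auto

lemma powser_pos_of_pos:
  assumes "\<And>n. 0 < a n" "1 \<le> conv_radius a" "0 \<le> s" "s < 1"
  shows "0 < powser a s"
proof (cases "s = 0")
  case True
  then show ?thesis
    using assms(1) by (simp add: powser_def)
next
  case False
  then show ?thesis
    using assms by (intro powser_pos[of a 0]) (auto intro: less_imp_le)
qed

lemma diffs_ratio: "diffs a n / diffs b n = a (Suc n) / b (Suc n)"
  for a b :: "nat \<Rightarrow> real"
  by (simp add: diffs_def)

lemma differentiable_ratio_powser:
  assumes "\<And>n. 0 < b n" "1 \<le> conv_radius a" "1 \<le> conv_radius b"
  shows "differentiable_ratio (powser a) (powser b) 0 1"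
proof
  fix s :: real assume s: "s \<in> {0..<1}"
  then have "\<bar>s\<bar> < 1"
    by simp
  then show "powser a differentiable (at s)" "powser b differentiable (at s)"
    using powser_has_real_derivative assms(2,3) unfolding real_differentiable_def by blast+
  show "0 < powser b s"
    using powser_pos_of_pos[OF assms(1,3)] s by simp
  have "0 < powser (diffs b) s"
    using assms(1) s order_trans[OF assms(3) conv_radius_diffs]
    by (intro powser_pos_of_pos) (auto simp: diffs_def)
  then show "0 < deriv (powser b) s"
    using deriv_powser[OF assms(3)] s by simp
qed

lemma H_fun_powser:
  assumes "1 \<le> conv_radius a" "1 \<le> conv_radius b" "\<bar>s\<bar> < 1"
  shows "H_fun (powser a) (powser b) s = powser (diffs a) s / powser (diffs b) s * powser b s - powser a s"
  using assms by (simp add: H_fun_def deriv_powser)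

lemma H_fun_powser_uminus:
  assumes "1 \<le> conv_radius a" "1 \<le> conv_radius b" "\<bar>s\<bar> < 1"
  shows "H_fun (powser (\<lambda>n. - a n)) (powser b) s = - H_fun (powser a) (powser b) s"
proof -
  have "1 \<le> conv_radius (diffs a)"
    using assms(1) conv_radius_diffs order_trans by blast
  then show ?thesis
    using assms by (simp add: H_fun_powser conv_radius_uminus diffs_minus powser_uminus)
qed

lemma H_fun_powser_0_nonneg:
  assumes "\<And>n. 0 < b n" "1 \<le> conv_radius a" "1 \<le> conv_radius b" "a 0 / b 0 \<le> a 1 / b 1"
  shows "0 \<le> H_fun (powser a) (powser b) 0"
proof -
  have "H_fun (powser a) (powser b) 0 = a 1 / b 1 * b 0 - a 0"
    using assms(2,3) by (simp add: H_fun_powser powser_def diffs_def)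
  then show ?thesis
    using assms(1)[of 0] assms(4) by (simp add: pos_divide_le_eq)
qed

lemma power_mult_power_le:
  fixes x y :: real
  assumes "0 \<le> x" "x \<le> y" "m \<le> n"
  shows "x ^ n * y ^ m \<le> y ^ n * x ^ m"
proof -
  obtain d where n: "n = m + d"
    using le_Suc_ex[OF assms(3)] by blast
  have "x ^ m * x ^ d * y ^ m \<le> x ^ m * y ^ d * y ^ m"
    using assms by (intro mult_right_mono mult_left_mono power_mono) auto
  then show ?thesis
    by (simp add: n power_add mult_ac)
qed

lemma suminf_power_nonneg_if_sign_change:
  fixes u :: "nat \<Rightarrow> real"
  assumes summable: "summable (\<lambda>n. u n * x ^ n)" "summable (\<lambda>n. u n * y ^ n)"
    and "0 \<le> x" "x \<le> y"
    and zero: "(\<Sum>n. u n * x ^ n) = 0"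
    and sign: "\<And>m n. m \<le> n \<Longrightarrow> 0 \<le> u m \<Longrightarrow> 0 \<le> u n"
  shows "0 \<le> (\<Sum>n. u n * y ^ n)"
proof -
  have "\<exists>k. 0 \<le> u k"
  proof (rule ccontr)
    assume "\<nexists>k. 0 \<le> u k"
    then have neg: "u n < 0" for n
      by (simp add: not_le)
    have "0 < (\<Sum>n. - (u n * x ^ n))"
    proof (rule suminf_pos2)
      show "summable (\<lambda>n. - (u n * x ^ n))"
        using summable(1) by (rule summable_minus)
      show "0 \<le> - (u n * x ^ n)" for n
        using neg[of n] \<open>0 \<le> x\<close> by (simp add: mult_nonpos_nonneg)
      show "0 < - (u 0 * x ^ 0)"
        using neg[of 0] by simp
    qed
    then show False
      using zero suminf_minus[OF summable(1)] by simp
  qed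
  define N where "N = (LEAST k. 0 \<le> u k)"
  have sign_N: "0 \<le> u n \<longleftrightarrow> N \<le> n" for n
    using LeastI_ex[OF \<open>\<exists>k. 0 \<le> u k\<close>] sign Least_le[of "\<lambda>k. 0 \<le> u k" n] unfolding N_def by blast
  have "u n * x ^ n * y ^ N \<le> u n * y ^ n * x ^ N" for n
  proof (cases "N \<le> n")
    case True
    then show ?thesis
      using power_mult_power_le[OF \<open>0 \<le> x\<close> \<open>x \<le> y\<close> True] sign_N[of n]
      by (simp add: mult.assoc mult_left_mono)
  next
    case False
    then show ?thesis
      using power_mult_power_le[OF \<open>0 \<le> x\<close> \<open>x \<le> y\<close>, of n N] sign_N[of n]
      by (simp add: mult.assoc mult_left_mono_neg mult.commute)
  qed
  then have "(\<Sum>n. u n * x ^ n) * y ^ N \<le> (\<Sum>n. u n * y ^ n) * x ^ N"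
    using summable by (simp add: suminf_mult2 summable_mult2 suminf_le)
  moreover have "0 < x ^ N"
  proof (cases "x = 0")
    case True
    then have "N = 0"
      using zero sign_N[of 0] by simp
    then show ?thesis
      by simp
  qed (use \<open>0 \<le> x\<close> in simp)
  ultimately show ?thesis
    using zero by (simp add: zero_le_mult_iff)
qed

lemma powser_ratio_mono:
  assumes b_pos: "\<And>n. 0 < b n" and radius: "1 \<le> conv_radius a" "1 \<le> conv_radius b"
    and mono: "mono (\<lambda>n. a n / b n)"
  shows "mono_on {0..<1} (\<lambda>s. powser a s / powser b s)"
proof (rule mono_onI)
  fix x y :: real assume "x \<in> {0..<1}" "y \<in> {0..<1}" "x \<le> y"
  define c where "c = powser a x / powser b x"
  define u where "u n = a n - c * b n" for n
  have summable: "summable (\<lambda>n. u n * s ^ n)"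
    and U: "(\<Sum>n. u n * s ^ n) = powser a s - c * powser b s" if "s \<in> {0..<1}" for s
  proof -
    have a: "summable (\<lambda>n. a n * s ^ n)" and b: "summable (\<lambda>n. c * (b n * s ^ n))"
      using summable_powser radius that by (auto intro: summable_mult)
    have u: "(\<lambda>n. u n * s ^ n) = (\<lambda>n. a n * s ^ n - c * (b n * s ^ n))"
      by (simp add: fun_eq_iff u_def algebra_simps)
    show "summable (\<lambda>n. u n * s ^ n)"
      unfolding u using a b by (rule summable_diff)
    have "(\<Sum>n. u n * s ^ n) = (\<Sum>n. a n * s ^ n) - (\<Sum>n. c * (b n * s ^ n))"
      unfolding u using a b by (rule suminf_diff[symmetric])
    also have "\<dots> = powser a s - c * powser b s"
      using summable_powser[OF radius(2)] that by (simp add: powser_def suminf_mult)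
    finally show "(\<Sum>n. u n * s ^ n) = powser a s - c * powser b s" .
  qed
  have "0 < powser b x" "0 < powser b y"
    using powser_pos_of_pos[OF b_pos radius(2)] \<open>x \<in> {0..<1}\<close> \<open>y \<in> {0..<1}\<close> by auto
  have "0 \<le> (\<Sum>n. u n * y ^ n)"
  proof (rule suminf_power_nonneg_if_sign_change)
    show "(\<Sum>n. u n * x ^ n) = 0"
      using U \<open>x \<in> {0..<1}\<close> \<open>0 < powser b x\<close> by (simp add: c_def)
    fix m n :: nat assume "m \<le> n" "0 \<le> u m"
    then have "c \<le> a m / b m"
      using b_pos[of m] by (simp add: u_def pos_le_divide_eq)
    also have "\<dots> \<le> a n / b n"
      using monoD[OF mono \<open>m \<le> n\<close>] .
    finally show "0 \<le> u n"
      using b_pos[of n] by (simp add: u_def pos_le_divide_eq)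
  qed (use summable \<open>x \<in> {0..<1}\<close> \<open>y \<in> {0..<1}\<close> \<open>x \<le> y\<close> in auto)
  then show "powser a x / powser b x \<le> powser a y / powser b y"
    using U \<open>y \<in> {0..<1}\<close> \<open>0 < powser b y\<close> by (simp add: c_def pos_le_divide_eq)
qed

lemma powser_ratio_uminus:
  "1 \<le> conv_radius a \<Longrightarrow> \<bar>s\<bar> < 1 \<Longrightarrow> powser (\<lambda>n. - a n) s / powser b s = - (powser a s / powser b s)"
  by (simp add: powser_uminus)

lemma powser_ratio_antimono:
  assumes b_pos: "\<And>n. 0 < b n" and radius: "1 \<le> conv_radius a" "1 \<le> conv_radius b"
    and antimono: "antimono (\<lambda>n. a n / b n)"
  shows "antimono_on {0..<1} (\<lambda>s. powser a s / powser b s)"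
proof -
  have "mono (\<lambda>n. - a n / b n)"
    using antimono by (auto simp: mono_def antimono_def)
  then have "mono_on {0..<1} (\<lambda>s. powser (\<lambda>n. - a n) s / powser b s)"
    using radius by (intro powser_ratio_mono b_pos) (simp_all add: conv_radius_uminus)
  then show ?thesis
    using radius(1) by (auto simp: monotone_on_def powser_ratio_uminus)
qed

lemma mono_on_diffs_ratio:
  "mono_on {..Suc m} (\<lambda>n. a n / b n) \<Longrightarrow> mono_on {..m} (\<lambda>n. diffs a n / diffs b n)"
  for a b :: "nat \<Rightarrow> real"
  unfolding diffs_ratio monotone_on_def by simp

lemma antimono_on_diffs_ratio:
  "antimono_on {Suc m..} (\<lambda>n. a n / b n) \<Longrightarrow> antimono_on {m..} (\<lambda>n. diffs a n / diffs b n)"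
  for a b :: "nat \<Rightarrow> real"
  unfolding diffs_ratio monotone_on_def by simp

lemma unimodal_on_deriv_powser_ratio:
  assumes "1 \<le> conv_radius a" "1 \<le> conv_radius b"
    and "unimodal_on {0..<1} (\<lambda>s. powser (diffs a) s / powser (diffs b) s)"
  shows "unimodal_on {0..<1} (\<lambda>s. deriv (powser a) s / deriv (powser b) s)"
proof (rule unimodal_on_cong[THEN iffD2, OF _ assms(3)])
  fix s :: real assume "s \<in> {0..<1}"
  then show "deriv (powser a) s / deriv (powser b) s = powser (diffs a) s / powser (diffs b) s"
    using assms(1,2) by (simp add: deriv_powser)
qed

lemma powser_ratio_unimodal:
  assumes "\<And>n. 0 < b n" "1 \<le> conv_radius a" "1 \<le> conv_radius b"
    and "mono_on {..m} (\<lambda>n. a n / b n)" "antimono_on {m..} (\<lambda>n. a n / b n)"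
  shows "unimodal_on {0..<1} (\<lambda>s. powser a s / powser b s)"
  using assms
proof (induction m arbitrary: a b)
  case 0
  then have "antimono_on {0..<1} (\<lambda>s. powser a s / powser b s)"
    by (intro powser_ratio_antimono) (simp_all add: antimono_def monotone_on_def)
  moreover have "{0..<1} \<inter> {..0} = {0::real}"
    by auto
  then have "mono_on ({0..<1} \<inter> {..0}) (\<lambda>s. powser a s / powser b s)"
    by (simp add: monotone_on_def)
  ultimately show ?case
    unfolding unimodal_on_def by (intro exI[of _ 0]) (simp add: Int_absorb2 subset_iff)
next
  case (Suc m)
  interpret differentiable_ratio "powser a" "powser b" 0 1
    using Suc.prems(1-3) by (rule differentiable_ratio_powser)
  have radius_diffs: "1 \<le> conv_radius (diffs a)" "1 \<le> conv_radius (diffs b)"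
    using Suc.prems(2,3) conv_radius_diffs order_trans by blast+
  have "unimodal_on {0..<1} (\<lambda>s. powser (diffs a) s / powser (diffs b) s)"
  proof (rule Suc.IH)
    show "0 < diffs b n" for n
      using Suc.prems(1) by (simp add: diffs_def)
  qed (use radius_diffs Suc.prems(4,5) mono_on_diffs_ratio antimono_on_diffs_ratio in simp_all)
  moreover have "0 \<le> H_fun (powser a) (powser b) 0"
    using Suc.prems(1-3) mono_onD[OF Suc.prems(4), of 0 1] by (intro H_fun_powser_0_nonneg) simp_all
  ultimately show ?case
    using Suc.prems(2,3) by (intro ratio_unimodal_on unimodal_on_deriv_powser_ratio)
qed

lemma powser_ratio_mono_if_unimodal:
  assumes "\<And>n. 0 < b n" "1 \<le> conv_radius a" "1 \<le> conv_radius b"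
    and "1 \<le> m" "mono_on {..m} (\<lambda>n. a n / b n)" "antimono_on {m..} (\<lambda>n. a n / b n)"
    and "((\<lambda>s. ereal (H_fun (powser a) (powser b) s)) \<longlongrightarrow> c) (at_left 1)" "0 \<le> c"
  shows "mono_on {0..<1} (\<lambda>s. powser a s / powser b s)"
proof -
  obtain k where m: "m = Suc k"
    using \<open>1 \<le> m\<close> not0_implies_Suc by fastforce
  interpret differentiable_ratio "powser a" "powser b" 0 1
    using assms(1-3) by (rule differentiable_ratio_powser)
  have radius_diffs: "1 \<le> conv_radius (diffs a)" "1 \<le> conv_radius (diffs b)"
    using assms(2,3) conv_radius_diffs order_trans by blast+
  have "unimodal_on {0..<1} (\<lambda>s. powser (diffs a) s / powser (diffs b) s)"
  proof (rule powser_ratio_unimodal)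
    show "0 < diffs b n" for n
      using assms(1) by (simp add: diffs_def)
  qed (use radius_diffs assms(5,6) mono_on_diffs_ratio antimono_on_diffs_ratio in \<open>simp_all add: m\<close>)
  moreover have "0 \<le> H_fun (powser a) (powser b) 0"
    using assms(1-4) mono_onD[OF assms(5), of 0 1] by (intro H_fun_powser_0_nonneg) simp_all
  ultimately show ?thesis
    using assms(2,3,7,8) by (intro ratio_mono_on unimodal_on_deriv_powser_ratio)
qed

lemma powser_ratio_antimono_if_unimodal:
  assumes "\<And>n. 0 < b n" "1 \<le> conv_radius a" "1 \<le> conv_radius b"
    and "1 \<le> m" "antimono_on {..m} (\<lambda>n. a n / b n)" "mono_on {m..} (\<lambda>n. a n / b n)"
    and "((\<lambda>s. ereal (H_fun (powser a) (powser b) s)) \<longlongrightarrow> c) (at_left 1)" "c \<le> 0"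
  shows "antimono_on {0..<1} (\<lambda>s. powser a s / powser b s)"
proof -
  have "\<forall>\<^sub>F s in at_left 1. - ereal (H_fun (powser a) (powser b) s)
      = ereal (H_fun (powser (\<lambda>n. - a n)) (powser b) s)"
    unfolding eventually_at_left_field
    using assms(2,3) by (intro exI[of _ 0]) (simp add: H_fun_powser_uminus)
  then have "((\<lambda>s. ereal (H_fun (powser (\<lambda>n. - a n)) (powser b) s)) \<longlongrightarrow> - c) (at_left 1)"
    using tendsto_uminus_ereal[OF assms(7)] by (rule tendsto_cong[THEN iffD1])
  moreover have "mono_on {..m} (\<lambda>n. - a n / b n)" "antimono_on {m..} (\<lambda>n. - a n / b n)"
    using assms(5,6) by (auto simp: monotone_on_def)
  ultimately have "mono_on {0..<1} (\<lambda>s. powser (\<lambda>n. - a n) s / powser b s)"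
    using assms(1-4,8) by (intro powser_ratio_mono_if_unimodal[of b _ m "- c"])
      (simp_all add: conv_radius_uminus ereal_uminus_le_reorder)
  then show ?thesis
    using assms(2) by (auto simp: monotone_on_def powser_ratio_uminus)
qed

section \<open>Laplace transforms\<close>

lemma LST_eq_powser: "LST p x = powser p (exp (- x))"
  unfolding LST_def powser_def by (simp add: exp_of_nat_mult[symmetric] mult.commute)

lemma H_fun_LST:
  assumes "1 \<le> conv_radius p" "1 \<le> conv_radius q" "0 < x"
  shows "H_fun (LST p) (LST q) x = H_fun (powser p) (powser q) (exp (- x))"
proof -
  have "deriv (LST f) x = deriv (powser f) (exp (- x)) * - exp (- x)" if "1 \<le> conv_radius f" for f
  proof (rule DERIV_imp_deriv)
    have "(powser f has_real_derivative deriv (powser f) (exp (- x))) (at (exp (- x)))"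
      using powser_has_real_derivative[OF that] deriv_powser[OF that] assms(3) by simp
    moreover have "((\<lambda>x. exp (- x)) has_real_derivative - exp (- x)) (at x)"
      by (auto intro!: derivative_eq_intros)
    ultimately show "(LST f has_real_derivative deriv (powser f) (exp (- x)) * - exp (- x)) (at x)"
      unfolding LST_eq_powser[abs_def] by (rule DERIV_chain2)
  qed
  then show ?thesis
    using assms(1,2) by (simp add: H_fun_def LST_eq_powser)
qed

lemma tendsto_H_fun_powser_at_left_1:
  assumes "1 \<le> conv_radius p" "1 \<le> conv_radius q"
    and "((\<lambda>x. ereal (H_fun (LST p) (LST q) x)) \<longlongrightarrow> c) (at_right 0)"
  shows "((\<lambda>s. ereal (H_fun (powser p) (powser q) s)) \<longlongrightarrow> c) (at_left 1)"
proof -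
  have "((\<lambda>s. ln s) \<longlongrightarrow> ln 1) (at_left (1::real))"
    by (intro tendsto_ln tendsto_ident_at) simp
  from tendsto_minus[OF this] have "((\<lambda>s. - ln s) \<longlongrightarrow> 0) (at_left (1::real))"
    by simp
  moreover have "\<forall>\<^sub>F s in at_left (1::real). 0 < - ln s"
    unfolding eventually_at_left_field by (intro exI[of _ 0]) auto
  ultimately have "filterlim (\<lambda>s. - ln s) (at_right 0) (at_left (1::real))"
    by (rule tendsto_imp_filterlim_at_right)
  then have lim: "((\<lambda>s. ereal (H_fun (LST p) (LST q) (- ln s))) \<longlongrightarrow> c) (at_left 1)"
    using assms(3) by (rule filterlim_compose[rotated])
  have "\<forall>\<^sub>F s in at_left 1. ereal (H_fun (LST p) (LST q) (- ln s)) = ereal (H_fun (powser p) (powser q) s)"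
    unfolding eventually_at_left_field using assms(1,2) by (intro exI[of _ 0]) (auto simp: H_fun_LST)
  from tendsto_cong[OF this] show ?thesis
    using lim by simp
qed

lemma lt_r_le_if_powser_ratio_mono:
  assumes "mono_on {0<..<1} (\<lambda>s. powser p s / powser q s)"
  shows "lt_r_le q p"
  unfolding lt_r_le_def LST_eq_powser
proof (intro allI impI)
  fix x y :: real assume "0 < x" "x \<le> y"
  then show "powser p (exp (- y)) / powser q (exp (- y)) \<le> powser p (exp (- x)) / powser q (exp (- x))"
    by (intro mono_onD[OF assms]) auto
qed

lemma lt_r_le_if_powser_ratio_antimono:
  assumes "antimono_on {0..<1} (\<lambda>s. powser p s / powser q s)"
    and "\<And>s. s \<in> {0<..<1} \<Longrightarrow> 0 < powser p s" "\<And>s. s \<in> {0<..<1} \<Longrightarrow> 0 < powser q s"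
  shows "lt_r_le p q"
proof (rule lt_r_le_if_powser_ratio_mono, rule mono_onI)
  fix x y :: real assume "x \<in> {0<..<1}" "y \<in> {0<..<1}" "x \<le> y"
  then have "powser p y / powser q y \<le> powser p x / powser q x"
    by (intro monotone_onD[OF assms(1)]) auto
  moreover have "0 < powser p y / powser q y"
    using assms(2,3) \<open>y \<in> {0<..<1}\<close> by simp
  ultimately have "inverse (powser p x / powser q x) \<le> inverse (powser p y / powser q y)"
    by (rule le_imp_inverse_le)
  then show "powser q x / powser p x \<le> powser q y / powser p y"
    by (simp add: inverse_divide)
qed

theorem theorem3:
  fixes p q :: "nat \<Rightarrow> real"
  assumes p_nonneg: "\<And>k. p k \<ge> 0"
    and q_pos: "\<And>k. q k > 0"
    and p_distr: "p sums 1"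
    and q_distr: "q sums 1"
  shows "(((\<forall>i j. i \<le> j \<longrightarrow> p i / q i \<le> p j / q j)
          \<or> (\<exists>m::nat. m \<ge> 1
               \<and> (\<forall>i j. i \<le> j \<and> j \<le> m \<longrightarrow> p i / q i \<le> p j / q j)
               \<and> (\<forall>i j. m \<le> i \<and> i \<le> j \<longrightarrow> p j / q j \<le> p i / q i)
               \<and> (\<exists>c::ereal. ((\<lambda>x. ereal (H_fun (LST p) (LST q) x)) \<longlongrightarrow> c) (at_right 0)
                            \<and> c \<ge> 0)))
         \<longrightarrow> lt_r_le q p)
       \<and> (((\<forall>i j. i \<le> j \<longrightarrow> p j / q j \<le> p i / q i)
          \<or> (\<exists>m::nat. m \<ge> 1
               \<and> (\<forall>i j. i \<le> j \<and> j \<le> m \<longrightarrow> p j / q j \<le> p i / q i)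
               \<and> (\<forall>i j. m \<le> i \<and> i \<le> j \<longrightarrow> p i / q i \<le> p j / q j)
               \<and> (\<exists>c::ereal. ((\<lambda>x. ereal (H_fun (LST p) (LST q) x)) \<longlongrightarrow> c) (at_right 0)
                            \<and> c \<le> 0)))
         \<longrightarrow> lt_r_le p q)"
proof -
  have radius: "1 \<le> conv_radius p" "1 \<le> conv_radius q"
    using p_distr q_distr conv_radius_geI[of p 1] conv_radius_geI[of q 1]
    by (auto dest: sums_summable simp: one_ereal_def)
  note lim = tendsto_H_fun_powser_at_left_1[OF radius]
  obtain k where "0 < p k"
    using p_distr p_nonneg sums_0[of p] sums_unique2 by (metis less_eq_real_def zero_neq_one)
  then have powser_p_pos: "0 < powser p s" if "s \<in> {0<..<1}" for s
    using p_nonneg radius(1) that by (intro powser_pos) auto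
  have powser_q_pos: "0 < powser q s" if "s \<in> {0<..<1}" for s
    using powser_pos_of_pos[OF q_pos radius(2)] that by simp
  show ?thesis
  proof (intro conjI impI; elim disjE exE conjE)
    show "lt_r_le q p" if "\<forall>i j. i \<le> j \<longrightarrow> p i / q i \<le> p j / q j"
      using that q_pos radius
      by (intro lt_r_le_if_powser_ratio_mono mono_on_subset[OF powser_ratio_mono]) (auto simp: mono_def)
    show "lt_r_le q p"
      if "1 \<le> m" "\<forall>i j. i \<le> j \<and> j \<le> m \<longrightarrow> p i / q i \<le> p j / q j"
        "\<forall>i j. m \<le> i \<and> i \<le> j \<longrightarrow> p j / q j \<le> p i / q i"
        "((\<lambda>x. ereal (H_fun (LST p) (LST q) x)) \<longlongrightarrow> c) (at_right 0)" "0 \<le> c" for m c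
      using that q_pos radius
      by (intro lt_r_le_if_powser_ratio_mono mono_on_subset[OF powser_ratio_mono_if_unimodal[of q p m c]] lim)
        (auto simp: monotone_on_def)
    show "lt_r_le p q" if "\<forall>i j. i \<le> j \<longrightarrow> p j / q j \<le> p i / q i"
      using that q_pos radius powser_p_pos powser_q_pos
      by (intro lt_r_le_if_powser_ratio_antimono powser_ratio_antimono) (auto simp: antimono_def)
    show "lt_r_le p q"
      if "1 \<le> m" "\<forall>i j. i \<le> j \<and> j \<le> m \<longrightarrow> p j / q j \<le> p i / q i"
        "\<forall>i j. m \<le> i \<and> i \<le> j \<longrightarrow> p i / q i \<le> p j / q j"
        "((\<lambda>x. ereal (H_fun (LST p) (LST q) x)) \<longlongrightarrow> c) (at_right 0)" "c \<le> 0" for m c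
      using that q_pos radius powser_p_pos powser_q_pos
      by (intro lt_r_le_if_powser_ratio_antimono powser_ratio_antimono_if_unimodal[of q p m c] lim)
        (auto simp: monotone_on_def)
  qed
qed

end
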